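(* Let $(M,\rho)$ be a complete metric space, let $f:M\to\mathbb{R}\cup\{+\infty\}$ be proper, lower semicontinuous and bounded below, and let $g:M\to\mathbb{R}$ be continuous with $$|\widetilde\nabla f|(x)>|\widetilde\nabla g|(x)\qquad\text{for all }x\in\operatorname{dom} f\setminus 0\operatorname{Crit} f.$$ Then for every $\varepsilon>0$ and every $x_0\in\operatorname{dom} f$ there exists $x\in\varepsilon\operatorname{Crit} f$ such that $$f(x)\le f(x_0)-\varepsilon\rho(x,x_0)\quad\text{and}\quad f(x_0)-g(x_0)\ge f(x)-g(x).$$ In particular, $f(y)-g(y)\ge\inf_{\varepsilon\operatorname{Crit} f}(f-g)$ for all $y\in\operatorname{dom} f$ and all $\varepsilon>0$.
   Context: $\operatorname{dom} f:=\{x:f(x)<+\infty\}$. $[t]^+:=\max\{0,t\}$ (with $[f(x)-f(y)]^+:=0$ if $f(y)=+\infty$). For $x\in\operatorname{dom} f$, the global slope is $|\widetilde\nabla f|(x):=\sup_{y\neq x}\frac{[f(x)-f(y)]^+}{\rho(x,y)}\in[0,+\infty]$. For $\varepsilon\ge0$, $\varepsilon\operatorname{Crit} f:=\{x\in\operatorname{dom} f:\ |\widetilde\nabla f|(x)\le\varepsilon\}$. *)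

theory Defs
  imports "HOL-Analysis.Analysis"
begin

definition edom :: "('a \<Rightarrow> ereal) \<Rightarrow> 'a set" where
  "edom f = {x. f x < \<infinity>}"

text \<open>If f y = +\<infinity> then f x - f y = -\<infinity> and the positive part is 0, matching the convention.
  The 0 is included so that the supremum over an empty index set is 0.\<close>

definition global_slope :: "('a::metric_space \<Rightarrow> ereal) \<Rightarrow> 'a \<Rightarrow> ereal" where
  "global_slope f x = Sup (insert 0 ((\<lambda>y. max 0 (f x - f y) / ereal (dist x y)) ` {y. y \<noteq> x}))"

definition eps_crit :: "real \<Rightarrow> ('a::metric_space \<Rightarrow> ereal) \<Rightarrow> 'a set" where
  "eps_crit \<epsilon> f = {x \<in> edom f. global_slope f x \<le> ereal \<epsilon>}"

definition lsc :: "('a::topological_space \<Rightarrow> ereal) \<Rightarrow> bool" where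
  "lsc f \<longleftrightarrow> (\<forall>x. f x \<le> Liminf (at x) f)"

end

theory Submission imports Defs begin

text \<open>Apply Ekeland's variational principle with constant \<epsilon> to f restricted to the closed set of
  points y with f y + \<epsilon> \<rho>(x0, y) \<le> f x0 and f y - g y \<le> f x0 - g x0. If the resulting point p
  had global slope above \<epsilon>, it would not be 0-critical, so the slope of f at p would exceed
  both \<epsilon> and the slope of g at p; a point y witnessing this satisfies
  f y + \<epsilon> \<rho>(p, y) < f p and f y - g y < f p - g p, so it lies in the same set and
  contradicts the strict minimality of p.\<close>

definition ekeland_slice :: "('a::metric_space \<Rightarrow> real) \<Rightarrow> real \<Rightarrow> 'a set \<Rightarrow> 'a \<Rightarrow> 'a set" where
  "ekeland_slice F \<epsilon> A x = {y\<in>A. F y + \<epsilon> * dist x y \<le> F x}"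

lemma ekeland_slice_refl: "x \<in> A \<Longrightarrow> x \<in> ekeland_slice F \<epsilon> A x"
  by (simp add: ekeland_slice_def)

lemma ekeland_slice_trans:
  assumes "0 \<le> \<epsilon>" and "y \<in> ekeland_slice F \<epsilon> A x" and "z \<in> ekeland_slice F \<epsilon> A y"
  shows "z \<in> ekeland_slice F \<epsilon> A x"
proof -
  have "\<epsilon> * dist x z \<le> \<epsilon> * dist x y + \<epsilon> * dist y z"
    using mult_left_mono[OF dist_triangle[of x z y] assms(1)] by (simp add: distrib_left)
  then show ?thesis
    using assms(2,3) by (auto simp: ekeland_slice_def)
qed

lemma ekeland_slices_shrink:
  fixes F :: "'a::metric_space \<Rightarrow> real"
  assumes "a \<in> A" and "\<epsilon> > 0" and bounded: "\<And>x. x \<in> A \<Longrightarrow> b \<le> F x"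
  obtains xs where "\<And>n. xs n \<in> A"
    and "\<And>n. ekeland_slice F \<epsilon> A (xs (Suc n)) \<subseteq> ekeland_slice F \<epsilon> A (xs n)"
    and "\<And>n z. z \<in> ekeland_slice F \<epsilon> A (xs (Suc n)) \<Longrightarrow> dist (xs (Suc n)) z \<le> (1/2)^n / \<epsilon>"
proof -
  let ?S = "ekeland_slice F \<epsilon> A"
  have S_bdd: "bdd_below (F ` ?S x)" for x
    using bounded by (auto simp: ekeland_slice_def bdd_below_def)
  have "\<exists>y. y \<in> ?S x \<and> F y < Inf (F ` ?S x) + (1/2)^n" if "x \<in> A" for x n
    using cINF_less_iff[of "?S x" F "Inf (F ` ?S x) + (1/2)^n", OF _ S_bdd] ekeland_slice_refl[OF that]
    by auto
  then have "\<forall>n x. \<exists>y. x \<in> A \<longrightarrow> y \<in> ?S x \<and> F y < Inf (F ` ?S x) + (1/2)^n"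
    by blast
  then obtain next_pt where next_pt:
    "\<And>x n. x \<in> A \<Longrightarrow> next_pt n x \<in> ?S x \<and> F (next_pt n x) < Inf (F ` ?S x) + (1/2)^n"
    by metis
  define xs where "xs = rec_nat a next_pt"
  have xs_Suc: "xs (Suc n) = next_pt n (xs n)" for n
    by (simp add: xs_def)
  have xs_in_A: "xs n \<in> A" for n
    by (induction n) (use \<open>a \<in> A\<close> next_pt in \<open>auto simp: xs_def ekeland_slice_def\<close>)
  have S_decr: "?S (xs (Suc n)) \<subseteq> ?S (xs n)" for n
    using ekeland_slice_trans[of \<epsilon>] next_pt[OF xs_in_A] \<open>\<epsilon> > 0\<close> by (metis less_imp_le subsetI xs_Suc)
  have "dist (xs (Suc n)) z \<le> (1/2)^n / \<epsilon>" if "z \<in> ?S (xs (Suc n))" for n z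
  proof -
    have "Inf (F ` ?S (xs n)) \<le> F z"
      using that S_decr S_bdd by (meson cINF_lower subsetD)
    moreover have "F (xs (Suc n)) < Inf (F ` ?S (xs n)) + (1/2)^n"
      using next_pt[OF xs_in_A[of n], of n] by (simp add: xs_Suc)
    moreover have "F z + \<epsilon> * dist (xs (Suc n)) z \<le> F (xs (Suc n))"
      using that by (simp add: ekeland_slice_def)
    ultimately have "\<epsilon> * dist (xs (Suc n)) z \<le> (1/2)^n"
      by linarith
    then show ?thesis
      using \<open>\<epsilon> > 0\<close> by (simp add: field_simps)
  qed
  then show thesis
    using that xs_in_A S_decr by blast
qed

lemma ekeland_variational_principle:
  fixes F :: "'a::complete_space \<Rightarrow> real"
  assumes "a \<in> A" and "\<epsilon> > 0"
    and closed_slice: "\<And>x. x \<in> A \<Longrightarrow> closed (ekeland_slice F \<epsilon> A x)"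
    and bounded: "\<And>x. x \<in> A \<Longrightarrow> b \<le> F x"
  obtains p where "p \<in> A" and "ekeland_slice F \<epsilon> A p = {p}"
proof -
  let ?S = "ekeland_slice F \<epsilon> A"
  obtain xs where xs_in_A: "\<And>n. xs n \<in> A" and S_decr: "\<And>n. ?S (xs (Suc n)) \<subseteq> ?S (xs n)"
    and S_small: "\<And>n z. z \<in> ?S (xs (Suc n)) \<Longrightarrow> dist (xs (Suc n)) z \<le> (1/2)^n / \<epsilon>"
    using ekeland_slices_shrink[of a A \<epsilon> b F, OF \<open>a \<in> A\<close> \<open>\<epsilon> > 0\<close> bounded] by blast
  have "\<exists>p. \<Inter> (range (\<lambda>n. ?S (xs n))) = {p}"
  proof (rule decreasing_closed_nest_sing)
    show "closed (?S (xs n))" for n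
      using closed_slice xs_in_A by blast
    show "?S (xs n) \<noteq> {}" for n
      using ekeland_slice_refl[OF xs_in_A] by blast
    show "?S (xs n) \<subseteq> ?S (xs m)" if "m \<le> n" for m n
      using that by (induction rule: dec_induct) (use S_decr in blast)+
    fix e :: real assume "e > 0"
    then obtain n where "(1/2::real)^n < e * \<epsilon> / 2"
      using real_arch_pow_inv[of "e * \<epsilon> / 2" "1/2::real"] \<open>\<epsilon> > 0\<close> by auto
    then have "2 * (1/2)^n / \<epsilon> < e"
      using \<open>\<epsilon> > 0\<close> by (simp add: field_simps)
    then have "dist y z < e" if "y \<in> ?S (xs (Suc n))" "z \<in> ?S (xs (Suc n))" for y z
      using dist_triangle3[of y z "xs (Suc n)"] S_small[OF that(1)] S_small[OF that(2)] by simp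
    then show "\<exists>n. \<forall>y\<in>?S (xs n). \<forall>z\<in>?S (xs n). dist y z < e"
      by blast
  qed
  then obtain p where p: "\<Inter> (range (\<lambda>n. ?S (xs n))) = {p}"
    by blast
  have p_in_S: "p \<in> ?S (xs n)" for n
    using p by blast
  have "?S p \<subseteq> ?S (xs n)" for n
    using ekeland_slice_trans[OF _ p_in_S] \<open>\<epsilon> > 0\<close> by auto
  then have "?S p \<subseteq> {p}"
    using p by blast
  moreover have "p \<in> A"
    using p_in_S[of 0] by (simp add: ekeland_slice_def)
  ultimately show thesis
    using ekeland_slice_refl[of p A F \<epsilon>] by (intro that) auto
qed

lemma closed_sublevel_lsc:
  fixes h :: "'a::topological_space \<Rightarrow> ereal"
  assumes "lsc h"
  shows "closed {x. h x \<le> c}"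
proof -
  have "eventually (\<lambda>y. c < h y) (nhds x)" if "c < h x" for x
  proof -
    have "c < Liminf (at x) h"
      using that assms by (auto simp: lsc_def intro: less_le_trans)
    then show ?thesis
      using that by (auto simp: eventually_nhds_conv_at dest: less_LiminfD)
  qed
  then have "open {x. c < h x}"
    by (metis (mono_tags, lifting) eventually_nhds mem_Collect_eq open_subopen subsetI)
  then show ?thesis
    by (simp add: closed_def Compl_eq not_le)
qed

lemma lsc_add_continuous:
  fixes f :: "'a::topological_space \<Rightarrow> ereal"
  assumes "lsc f" and "continuous_on UNIV \<phi>"
  shows "lsc (\<lambda>x. f x + ereal (\<phi> x))"
  unfolding lsc_def le_Liminf_iff
proof (intro allI impI)
  fix x w assume "w < f x + ereal (\<phi> x)"
  then have "w - ereal (\<phi> x) < f x"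
    by (simp add: ereal_minus_less_iff)
  then obtain a where a: "w - ereal (\<phi> x) < ereal a" "ereal a < f x"
    by (metis dense less_ereal.simps(2) ereal_dense2 less_trans)
  have "eventually (\<lambda>z. ereal a < f z) (at x)"
    using assms(1) a(2) by (auto simp: lsc_def le_Liminf_iff)
  moreover have "eventually (\<lambda>z. w < ereal (a + \<phi> z)) (at x)"
  proof (rule order_tendstoD(1))
    show "((\<lambda>z. ereal (a + \<phi> z)) \<longlongrightarrow> ereal (a + \<phi> x)) (at x)"
      using assms(2) by (intro tendsto_intros) (simp add: continuous_on_def)
    show "w < ereal (a + \<phi> x)"
      using a(1) by (simp add: ereal_minus_less_iff)
  qed
  ultimately show "eventually (\<lambda>z. w < f z + ereal (\<phi> z)) (at x)"
    by eventually_elim (metis add_right_mono less_le_trans plus_ereal.simps(1) less_imp_le)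
qed

lemma closed_ekeland_slice:
  fixes f :: "'a::metric_space \<Rightarrow> ereal"
  assumes "lsc f" and "closed A" and "\<And>y. y \<in> A \<Longrightarrow> f y = ereal (F y)"
  shows "closed (ekeland_slice F \<epsilon> A x)"
proof -
  have "ekeland_slice F \<epsilon> A x = A \<inter> {y. f y + ereal (\<epsilon> * dist x y) \<le> ereal (F x)}"
    using assms(3) by (auto simp: ekeland_slice_def)
  then show ?thesis
    using assms(1,2) by (auto intro!: closed_Int closed_sublevel_lsc lsc_add_continuous continuous_intros)
qed

lemma slope_quotient_le_global_slope:
  "y \<noteq> x \<Longrightarrow> max 0 (f x - f y) / ereal (dist x y) \<le> global_slope f x"
  unfolding global_slope_def by (intro Sup_upper) auto

lemma less_global_slopeE:
  assumes "t < global_slope f x" and "0 \<le> t"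
  obtains y where "y \<noteq> x" and "t < max 0 (f x - f y) / ereal (dist x y)"
  using assms unfolding global_slope_def less_Sup_iff by auto

lemma ereal_pos_part_divide:
  "0 < d \<Longrightarrow> max 0 (ereal u) / ereal d = ereal (max 0 u / d)"
  by (simp add: max_def)

lemma less_pos_part_divideD:
  fixes c d u :: real
  assumes "0 \<le> c" and "0 < d" and "c < max 0 u / d"
  shows "c * d < u"
proof (cases "u \<le> 0")
  case True
  then show ?thesis using assms by simp
next
  case False
  then show ?thesis using assms by (simp add: pos_less_divide_eq)
qed

lemma global_slope_descent:
  fixes f :: "'a::metric_space \<Rightarrow> ereal" and g :: "'a \<Rightarrow> real"
  assumes "\<And>y. f y \<noteq> -\<infinity>" and "f p = ereal a" and "0 \<le> \<epsilon>"
    and "ereal \<epsilon> < global_slope f p"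
    and "global_slope (\<lambda>y. ereal (g y)) p < global_slope f p"
  obtains y r where "y \<noteq> p" and "f y = ereal r"
    and "\<epsilon> * dist p y < a - r" and "g p - g y < a - r"
proof -
  define t where "t = max (ereal \<epsilon>) (global_slope (\<lambda>y. ereal (g y)) p)"
  have "t < global_slope f p"
    using assms(4,5) by (simp add: t_def)
  moreover have "0 \<le> t"
    using \<open>0 \<le> \<epsilon>\<close> by (simp add: t_def le_max_iff_disj)
  ultimately obtain y where "y \<noteq> p" and y: "t < max 0 (f p - f y) / ereal (dist p y)"
    by (rule less_global_slopeE)
  have "f y \<noteq> \<infinity>"
    using y \<open>0 \<le> t\<close> \<open>f p = ereal a\<close> by auto
  then obtain r where r: "f y = ereal r"
    using assms(1)[of y] by (cases "f y") auto
  have d: "0 < dist p y"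
    using \<open>y \<noteq> p\<close> by simp
  have t_less: "t < ereal (max 0 (a - r) / dist p y)"
    using y d by (simp add: \<open>f p = ereal a\<close> r ereal_pos_part_divide)
  then have "\<epsilon> * dist p y < a - r"
    using d \<open>0 \<le> \<epsilon>\<close> by (intro less_pos_part_divideD) (auto simp: t_def)
  moreover have "g p - g y < a - r"
  proof -
    have "ereal (max 0 (g p - g y) / dist p y) \<le> global_slope (\<lambda>y. ereal (g y)) p"
      using slope_quotient_le_global_slope[OF \<open>y \<noteq> p\<close>, of "\<lambda>y. ereal (g y)"] d
      by (simp add: ereal_pos_part_divide)
    also have "\<dots> < ereal (max 0 (a - r) / dist p y)"
      using t_less by (simp add: t_def)
    finally have "max 0 (g p - g y) / dist p y < max 0 (a - r) / dist p y"
      by simp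
    then have "max 0 (g p - g y) / dist p y * dist p y < a - r"
      using d by (intro less_pos_part_divideD) auto
    then show ?thesis
      using d by simp
  qed
  ultimately show thesis
    using \<open>y \<noteq> p\<close> r that by blast
qed

lemma eps_crit_if_no_joint_descent:
  fixes f :: "'a::metric_space \<Rightarrow> ereal" and g :: "'a \<Rightarrow> real"
  assumes f_not_MInf: "\<And>y. f y \<noteq> -\<infinity>"
    and slope: "\<forall>x \<in> edom f - eps_crit 0 f. global_slope f x > global_slope (\<lambda>y. ereal (g y)) x"
    and "\<epsilon> > 0" and "p \<in> edom f"
    and no_descent: "\<And>y. f y + ereal (\<epsilon> * dist p y) \<le> f p \<Longrightarrow>
      f y - ereal (g y) \<le> f p - ereal (g p) \<Longrightarrow> y = p"
  shows "p \<in> eps_crit \<epsilon> f"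
proof -
  obtain a where a: "f p = ereal a"
    using \<open>p \<in> edom f\<close> f_not_MInf[of p] by (cases "f p") (auto simp: edom_def)
  have "global_slope f p \<le> ereal \<epsilon>"
  proof (rule ccontr)
    assume "\<not> global_slope f p \<le> ereal \<epsilon>"
    then have slope_f: "ereal \<epsilon> < global_slope f p"
      by simp
    then have "p \<notin> eps_crit 0 f"
      using \<open>\<epsilon> > 0\<close> by (auto simp: eps_crit_def dest: less_le_trans)
    then have slope_g: "global_slope (\<lambda>y. ereal (g y)) p < global_slope f p"
      using slope \<open>p \<in> edom f\<close> by blast
    obtain y r where "y \<noteq> p" and "f y = ereal r"
      and "\<epsilon> * dist p y < a - r" and "g p - g y < a - r"
      using global_slope_descent[OF f_not_MInf a _ slope_f slope_g] \<open>\<epsilon> > 0\<close> by auto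
    then show False
      using no_descent[of y] a by simp
  qed
  then show ?thesis
    using \<open>p \<in> edom f\<close> by (simp add: eps_crit_def)
qed

lemma exists_eps_crit_descent_point:
  fixes f :: "'a::complete_space \<Rightarrow> ereal" and g :: "'a \<Rightarrow> real"
  assumes lsc_f: "lsc f" and bounded: "\<And>x. ereal b \<le> f x"
    and cont_g: "continuous_on UNIV g"
    and slope: "\<forall>x \<in> edom f - eps_crit 0 f. global_slope f x > global_slope (\<lambda>y. ereal (g y)) x"
    and "\<epsilon> > 0" and "x0 \<in> edom f"
  obtains x where "x \<in> eps_crit \<epsilon> f" and "f x \<le> f x0 - ereal (\<epsilon> * dist x x0)"
    and "f x - ereal (g x) \<le> f x0 - ereal (g x0)"
proof -
  have f_not_MInf: "f x \<noteq> -\<infinity>" for x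
    using bounded[of x] by auto
  define F where "F x = real_of_ereal (f x)" for x
  have f_eq_F: "f x = ereal (F x)" if "x \<in> edom f" for x
    using that f_not_MInf[of x] by (cases "f x") (auto simp: edom_def F_def)
  define A where "A = {y. f y + ereal (\<epsilon> * dist x0 y) \<le> ereal (F x0)}
    \<inter> {y. f y + ereal (- g y) \<le> ereal (F x0 - g x0)}"
  have A_iff: "y \<in> A \<longleftrightarrow> y \<in> edom f \<and> F y + \<epsilon> * dist x0 y \<le> F x0 \<and> F y - g y \<le> F x0 - g x0"
    for y
    using f_not_MInf[of y] by (cases "f y") (auto simp: A_def F_def edom_def)
  have "closed A"
    unfolding A_def using lsc_f cont_g
    by (auto intro!: closed_Int closed_sublevel_lsc lsc_add_continuous continuous_intros)
  then have closed_slice: "closed (ekeland_slice F \<epsilon> A x)" for x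
    using A_iff f_eq_F by (intro closed_ekeland_slice[OF lsc_f]) auto
  have "x0 \<in> A"
    using A_iff \<open>x0 \<in> edom f\<close> by simp
  moreover have "b \<le> F x" if "x \<in> A" for x
    using bounded[of x] f_eq_F[of x] that A_iff by simp
  ultimately obtain p where "p \<in> A" and p_min: "ekeland_slice F \<epsilon> A p = {p}"
    using ekeland_variational_principle[OF _ \<open>\<epsilon> > 0\<close> closed_slice] by blast
  have "p \<in> edom f" and p_descent: "F p + \<epsilon> * dist x0 p \<le> F x0" and p_gap: "F p - g p \<le> F x0 - g x0"
    using \<open>p \<in> A\<close> A_iff by auto
  have "y = p" if "f y + ereal (\<epsilon> * dist p y) \<le> f p" and "f y - ereal (g y) \<le> f p - ereal (g p)" for y
  proof -
    have "f y \<noteq> \<infinity>"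
      using that(1) f_eq_F[OF \<open>p \<in> edom f\<close>] by auto
    then obtain r where r: "f y = ereal r"
      using f_not_MInf[of y] by (cases "f y") auto
    then have "y \<in> edom f" and "F y = r"
      by (simp_all add: edom_def F_def)
    moreover have "F y + \<epsilon> * dist p y \<le> F p" and "F y - g y \<le> F p - g p"
      using that r \<open>F y = r\<close> f_eq_F[OF \<open>p \<in> edom f\<close>] by simp_all
    moreover have "\<epsilon> * dist x0 y \<le> \<epsilon> * dist x0 p + \<epsilon> * dist p y"
      using \<open>\<epsilon> > 0\<close> dist_triangle[of x0 y p] by (simp flip: distrib_left)
    ultimately have "y \<in> ekeland_slice F \<epsilon> A p"
      using p_descent p_gap by (auto simp: ekeland_slice_def A_iff)
    then show ?thesis
      using p_min by blast
  qed
  then have "p \<in> eps_crit \<epsilon> f"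
    using eps_crit_if_no_joint_descent[OF f_not_MInf slope \<open>\<epsilon> > 0\<close> \<open>p \<in> edom f\<close>] by blast
  then show thesis
    using that \<open>p \<in> edom f\<close> p_descent p_gap f_eq_F \<open>x0 \<in> edom f\<close>
    by (simp add: dist_commute)
qed

theorem proposition3p6:
  fixes f :: "'a::complete_space \<Rightarrow> ereal" and g :: "'a \<Rightarrow> real"
  assumes proper: "edom f \<noteq> {}"
    and lsc_f: "lsc f"
    and bdd_below: "\<exists>b::real. \<forall>x. ereal b \<le> f x"
    and cont_g: "continuous_on UNIV g"
    and slope: "\<forall>x \<in> edom f - eps_crit 0 f.
                  global_slope f x > global_slope (\<lambda>y. ereal (g y)) x"
  shows "(\<forall>\<epsilon>>0. \<forall>x0 \<in> edom f. \<exists>x \<in> eps_crit \<epsilon> f.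
            f x \<le> f x0 - ereal (\<epsilon> * dist x x0) \<and>
            f x0 - ereal (g x0) \<ge> f x - ereal (g x))
      \<and> (\<forall>\<epsilon>>0. \<forall>y \<in> edom f.
            f y - ereal (g y) \<ge> (INF x \<in> eps_crit \<epsilon> f. f x - ereal (g x)))"
proof -
  obtain b :: real where bounded: "\<And>x. ereal b \<le> f x"
    using bdd_below by blast
  have "\<exists>x \<in> eps_crit \<epsilon> f. f x \<le> f x0 - ereal (\<epsilon> * dist x x0) \<and>
      f x0 - ereal (g x0) \<ge> f x - ereal (g x)" if "\<epsilon> > 0" and "x0 \<in> edom f" for \<epsilon> x0
    using exists_eps_crit_descent_point[OF lsc_f bounded cont_g slope that] by blast
  then show ?thesis
    by (meson INF_lower2)
qed

end
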